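(* Fix $n\in\mathbb{N}$ and $s\in(0,1)$. Suppose that for every $i>2$ the jump kernels $j_i^{(n)}$ satisfy $\lambda_i|x-y|^{-1-2s}\le j_i^{(n)}(x,y)\le\Lambda_i|x-y|^{-1-2s}$ for all $n\ge0$ and all wires $\{x,y\}$, with constants $0<\lambda_i\le\Lambda_i<\infty$ satisfying $\lim_{i\to\infty}\lambda_i/i^2=1$ and $\lim_{i\to\infty}\Lambda_i/i^2=1$. Then $$\lim_{i\to\infty}\sum_{x\in V_{i-}^{(n)}}\sum_{y\in V_{i+}^{(n)}}j_i^{(n)}(x,y)\mu_i^{(n)}(x)\mu_i^{(n)}(y)=1.$$
   Context: Index graph: vertices $\mathbb{N}$; vertex $i$ has edges $e_{i,2i-2}$ to $2i-2$ (only if $i\ge2$), $e_{i,2i-1},e'_{i,2i-1}$ to $2i-1$, $e_{i,2i}$ to $2i$, weights $r_e>0$ with $r_{e_{i,2i-1}}=r_{e'_{i,2i-1}}$. For $e$ from $i$ to $j$, $\phi_e(x)=\frac{j}{2i}x+s_e$, $s_e=0$ for $e\in\{e_{i,2i-1},e_{i,2i}\}$, $s_e=\frac1{2i}$ for $e\in\{e_{i,2i-2},e'_{i,2i-1}\}$. $E_i^{(n)}$: paths $\sigma=e_1\cdots e_n$ of length $n$ from $i$; $\phi_\sigma=\phi_{e_1}\circ\cdots\circ\phi_{e_n}$, $\delta_\sigma=r_{e_1}\cdots r_{e_n}$. For $i>1$: $V_{i-}^{(n)}=\{k/(i2^n)\}_{k=0}^{2^n-1}$, $V_{i+}^{(n)}=\{1-k/(i2^n)\}_{k=0}^{2^n-1}$;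 the wires $\{\phi_\sigma(0),\phi_\sigma(1)\}$, $\sigma\in E_i^{(n)}$, are all pairs $\{x,y\}$ with $x\in V_{i-}^{(n)},y\in V_{i+}^{(n)}$, each with a unique path $\sigma^{(n)}_{x,y}$. $\mu_i^{(n)}(x)=\frac1{i2^n}$ for $x\in V_{i-}^{(n)}\cup V_{i+}^{(n)}$. Kernel $j_i^{(n)}(x,y)=(\delta_{\sigma^{(n)}_{x,y}}\mu_i^{(n)}(x)\mu_i^{(n)}(y))^{-1}$ on wires, $0$ otherwise. *)

theory Defs
  imports Complex_Main
begin

text \<open>Edges of the index graph: an edge is a pair (i, label) where i is the source
vertex. Labels: Lft = e_{i,2i-2}, Mid = e_{i,2i-1}, Mid' = e'_{i,2i-1}, Rgt = e_{i,2i}.\<close>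

datatype elab = Lft | Mid | Mid' | Rgt

type_synonym edge = "nat \<times> elab"

definition valid_edge :: "edge \<Rightarrow> bool" where
  "valid_edge e \<longleftrightarrow> fst e \<ge> 1 \<and> (snd e = Lft \<longrightarrow> fst e \<ge> 2)"

fun tgt :: "edge \<Rightarrow> nat" where
  "tgt (i, Lft) = 2*i - 2"
| "tgt (i, Mid) = 2*i - 1"
| "tgt (i, Mid') = 2*i - 1"
| "tgt (i, Rgt) = 2*i"

fun shift :: "edge \<Rightarrow> real" where
  "shift (i, Lft) = 1 / (2 * real i)"
| "shift (i, Mid) = 0"
| "shift (i, Mid') = 1 / (2 * real i)"
| "shift (i, Rgt) = 0"

definition phi_edge :: "edge \<Rightarrow> real \<Rightarrow> real" where
  "phi_edge e x = real (tgt e) / (2 * real (fst e)) * x + shift e"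

fun paths :: "nat \<Rightarrow> nat \<Rightarrow> edge list set" where
  "paths i 0 = {[]}"
| "paths i (Suc n) = {e # \<sigma> | e \<sigma>. fst e = i \<and> valid_edge e \<and> \<sigma> \<in> paths (tgt e) n}"

definition phi_path :: "edge list \<Rightarrow> real \<Rightarrow> real" where
  "phi_path \<sigma> = foldr (\<lambda>e f. phi_edge e \<circ> f) \<sigma> id"

definition delta :: "(edge \<Rightarrow> real) \<Rightarrow> edge list \<Rightarrow> real" where
  "delta r \<sigma> = prod_list (map r \<sigma>)"

definition Vminus :: "nat \<Rightarrow> nat \<Rightarrow> real set" where
  "Vminus i n = {real k / (real i * 2 ^ n) | k. k < 2 ^ n}"

definition Vplus :: "nat \<Rightarrow> nat \<Rightarrow> real set" where
  "Vplus i n = {1 - real k / (real i * 2 ^ n) | k. k < 2 ^ n}"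

definition mu :: "nat \<Rightarrow> nat \<Rightarrow> real \<Rightarrow> real" where
  "mu i n x = (if x \<in> Vminus i n \<union> Vplus i n then 1 / (real i * 2 ^ n) else 0)"

definition is_wire_path :: "nat \<Rightarrow> nat \<Rightarrow> real \<Rightarrow> real \<Rightarrow> edge list \<Rightarrow> bool" where
  "is_wire_path i n x y \<sigma> \<longleftrightarrow> \<sigma> \<in> paths i n \<and> {phi_path \<sigma> 0, phi_path \<sigma> 1} = {x, y}"

definition jkernel :: "(edge \<Rightarrow> real) \<Rightarrow> nat \<Rightarrow> nat \<Rightarrow> real \<Rightarrow> real \<Rightarrow> real" where
  "jkernel r i n x y =
     (if \<exists>\<sigma>. is_wire_path i n x y \<sigma>
      then 1 / (delta r (THE \<sigma>. is_wire_path i n x y \<sigma>) * mu i n x * mu i n y)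
      else 0)"

end

theory Submission
  imports Defs
begin

text \<open>Every pair in \<open>V\<^sub>i\<^sub>-\<^sup>(\<^sup>n\<^sup>) \<times> V\<^sub>i\<^sub>+\<^sup>(\<^sup>n\<^sup>)\<close> is a wire: peeling off the first edge of a path
halves the scale, and the four edge labels realise the four choices of the halves containing the
two endpoints. The endpoints lie within \<open>1/i\<close> of \<open>0\<close> and \<open>1\<close> respectively, so every wire has
length in \<open>[1 - 2/i, 1]\<close> and the kernel bounds pin each summand between \<open>\<lambda>\<^sub>i \<mu>\<^sup>2\<close> and
\<open>\<Lambda>\<^sub>i (1 - 2/i)\<^sup>-\<^sup>1\<^sup>-\<^sup>2\<^sup>s \<mu>\<^sup>2\<close>, with \<open>\<mu> = 1/(i 2\<^sup>n)\<close>. Summing over the \<open>4\<^sup>n\<close> pairs squeezes the sum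
between \<open>\<lambda>\<^sub>i/i\<^sup>2\<close> and \<open>\<Lambda>\<^sub>i/i\<^sup>2 (1 - 2/i)\<^sup>-\<^sup>1\<^sup>-\<^sup>2\<^sup>s\<close>. The weights \<open>r\<close> enter only through the kernel,
which the hypothesis bounds directly.\<close>

lemma phi_path_Cons: "phi_path (e # \<sigma>) x = phi_edge e (phi_path \<sigma> x)"
  by (simp add: phi_path_def)

lemma paths_Cons:
  "fst e = i \<Longrightarrow> valid_edge e \<Longrightarrow> \<sigma> \<in> paths (tgt e) n \<Longrightarrow> e # \<sigma> \<in> paths i (Suc n)"
  by (cases e) auto

text \<open>The label of the first edge of the path joining \<open>x\<close> and \<open>y\<close>, given whether \<open>x\<close> lies in the
right half of \<open>V\<^sub>i\<^sub>-\<^sup>(\<^sup>n\<^sup>+\<^sup>1\<^sup>)\<close> and whether \<open>y\<close> lies in the left half of \<open>V\<^sub>i\<^sub>+\<^sup>(\<^sup>n\<^sup>+\<^sup>1\<^sup>)\<close>.\<close>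
fun wire_label :: "bool \<Rightarrow> bool \<Rightarrow> elab" where
  "wire_label False False = Rgt"
| "wire_label False True = Mid"
| "wire_label True False = Mid'"
| "wire_label True True = Lft"

lemma tgt_wire_label: "tgt (i, wire_label a b) = 2 * i - of_bool a - of_bool b"
  by (cases a; cases b) auto

lemma shift_wire_label: "shift (i, wire_label a b) = of_bool a / (2 * real i)"
  by (cases a; cases b) auto

lemma valid_edge_wire_label: "2 \<le> i \<Longrightarrow> valid_edge (i, wire_label a b)"
  by (cases a; cases b) (auto simp: valid_edge_def)

lemma phi_edge_wire_label:
  fixes a b :: bool
  assumes "2 \<le> i"
  defines "e \<equiv> (i, wire_label a b)"
  shows "phi_edge e (real k / (real (tgt e) * 2 ^ n))
           = real (of_bool a * 2 ^ n + k) / (real i * 2 ^ Suc n)"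
    and "phi_edge e (1 - real l / (real (tgt e) * 2 ^ n))
           = 1 - real (of_bool b * 2 ^ n + l) / (real i * 2 ^ Suc n)"
proof -
  have j: "real (tgt e) = 2 * real i - of_bool a - of_bool b"
    using assms by (simp add: tgt_wire_label of_nat_diff)
  then have "real (tgt e) > 0" using assms by simp
  then show "phi_edge e (real k / (real (tgt e) * 2 ^ n))
           = real (of_bool a * 2 ^ n + k) / (real i * 2 ^ Suc n)"
       and "phi_edge e (1 - real l / (real (tgt e) * 2 ^ n))
           = 1 - real (of_bool b * 2 ^ n + l) / (real i * 2 ^ Suc n)"
    using assms by (simp_all add: phi_edge_def shift_wire_label j field_simps)
qed

lemma ex_path_with_endpoints:
  assumes "2 \<le> i" "k < 2 ^ n" "l < 2 ^ n"
  shows "\<exists>\<sigma>\<in>paths i n. phi_path \<sigma> 0 = real k / (real i * 2 ^ n)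
                       \<and> phi_path \<sigma> 1 = 1 - real l / (real i * 2 ^ n)"
  using assms
proof (induction n arbitrary: i k l)
  case 0
  then show ?case by (simp add: phi_path_def)
next
  case (Suc n)
  define a where "a = (2 ^ n \<le> k)"
  define b where "b = (2 ^ n \<le> l)"
  define e where "e = (i, wire_label a b)"
  define k' where "k' = k - of_bool a * 2 ^ n"
  define l' where "l' = l - of_bool b * 2 ^ n"
  have k: "k = of_bool a * 2 ^ n + k'" "k' < 2 ^ n"
    using Suc.prems by (auto simp: a_def k'_def)
  have l: "l = of_bool b * 2 ^ n + l'" "l' < 2 ^ n"
    using Suc.prems by (auto simp: b_def l'_def)
  have "2 \<le> tgt e"
    using Suc.prems(1) by (auto simp: e_def tgt_wire_label)
  then obtain \<tau> where \<tau>: "\<tau> \<in> paths (tgt e) n"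
    "phi_path \<tau> 0 = real k' / (real (tgt e) * 2 ^ n)"
    "phi_path \<tau> 1 = 1 - real l' / (real (tgt e) * 2 ^ n)"
    using Suc.IH k(2) l(2) by blast
  have "e # \<tau> \<in> paths i (Suc n)"
    using \<tau>(1) Suc.prems(1) by (intro paths_Cons) (simp_all add: e_def valid_edge_wire_label)
  moreover have "phi_path (e # \<tau>) 0 = real k / (real i * 2 ^ Suc n)"
    and "phi_path (e # \<tau>) 1 = 1 - real l / (real i * 2 ^ Suc n)"
    unfolding phi_path_Cons \<tau>(2,3) e_def k(1) l(1)
    using phi_edge_wire_label Suc.prems(1) by blast+
  ultimately show ?case by blast
qed

lemma wire_path_exists:
  assumes "2 \<le> i" "x \<in> Vminus i n" "y \<in> Vplus i n"
  shows "\<exists>\<sigma>\<in>paths i n. phi_path \<sigma> 0 = x \<and> phi_path \<sigma> 1 = y"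
  using assms ex_path_with_endpoints by (auto simp: Vminus_def Vplus_def)

lemma Vminus_bounds:
  assumes "0 < i" "x \<in> Vminus i n"
  shows "0 \<le> x" "x < 1 / real i"
proof -
  obtain k :: nat where "k < 2 ^ n" "x = real k / (real i * 2 ^ n)"
    using assms(2) by (auto simp: Vminus_def)
  moreover have "real k / (real i * 2 ^ n) < 1 / real i" if "k < 2 ^ n" for k :: nat
  proof -
    have "real k < 2 ^ n"
      using that by (metis of_nat_less_iff of_nat_numeral of_nat_power)
    then have "real k / (real i * 2 ^ n) < 2 ^ n / (real i * 2 ^ n)"
      using assms(1) by (intro divide_strict_right_mono) auto
    then show ?thesis by simp
  qed
  ultimately show "0 \<le> x" "x < 1 / real i" by auto
qed

lemma Vplus_eq_reflect_Vminus: "Vplus i n = (\<lambda>x. 1 - x) ` Vminus i n"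
  by (auto simp: Vplus_def Vminus_def)

lemma wire_length_bounds:
  assumes "0 < i" "x \<in> Vminus i n" "y \<in> Vplus i n"
  shows "1 - 2 / real i \<le> \<bar>x - y\<bar>" "\<bar>x - y\<bar> \<le> 1"
proof -
  obtain x' where x': "x' \<in> Vminus i n" "y = 1 - x'"
    using assms(3) by (auto simp: Vplus_eq_reflect_Vminus)
  have "1 / real i \<le> 1" using assms(1) by simp
  with Vminus_bounds[OF assms(1,2)] Vminus_bounds[OF assms(1) x'(1)] x'(2)
  show "1 - 2 / real i \<le> \<bar>x - y\<bar>" "\<bar>x - y\<bar> \<le> 1"
    by linarith+
qed

lemma card_Vminus: "0 < i \<Longrightarrow> card (Vminus i n) = 2 ^ n"
proof -
  assume "0 < i"
  then have "inj_on (\<lambda>k. real k / (real i * 2 ^ n)) {..<2 ^ n}"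
    by (auto simp: inj_on_def)
  moreover have "Vminus i n = (\<lambda>k. real k / (real i * 2 ^ n)) ` {..<2 ^ n}"
    by (auto simp: Vminus_def)
  ultimately show ?thesis by (simp add: card_image)
qed

lemma card_Vplus: "0 < i \<Longrightarrow> card (Vplus i n) = 2 ^ n"
  by (simp add: Vplus_eq_reflect_Vminus card_image inj_on_def card_Vminus)

lemma mu_Vminus: "x \<in> Vminus i n \<Longrightarrow> mu i n x = 1 / (real i * 2 ^ n)"
  and mu_Vplus: "y \<in> Vplus i n \<Longrightarrow> mu i n y = 1 / (real i * 2 ^ n)"
  by (simp_all add: mu_def)

lemma wire_length_powr_bounds:
  assumes "2 < i" "x \<in> Vminus i n" "y \<in> Vplus i n" "p \<le> 0"
  shows "1 \<le> \<bar>x - y\<bar> powr p" "\<bar>x - y\<bar> powr p \<le> (1 - 2 / real i) powr p"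
proof -
  have "0 < 1 - 2 / real i" using assms(1) by (simp add: field_simps)
  with wire_length_bounds[of i x n y] assms have "0 < \<bar>x - y\<bar>" by linarith
  with wire_length_bounds[of i x n y] assms show "1 \<le> \<bar>x - y\<bar> powr p"
    "\<bar>x - y\<bar> powr p \<le> (1 - 2 / real i) powr p"
    using powr_mono2'[of p "\<bar>x - y\<bar>" 1] powr_mono2'[of p "1 - 2 / real i" "\<bar>x - y\<bar>"]
    by auto
qed

lemma kernel_sum_bounds:
  fixes J :: "real \<Rightarrow> real \<Rightarrow> real" and a A p :: real
  assumes i: "2 < i" and a: "0 \<le> a" and A: "0 \<le> A" and p: "p \<le> 0"
    and J: "\<And>x y. x \<in> Vminus i n \<Longrightarrow> y \<in> Vplus i n \<Longrightarrow>
              a * \<bar>x - y\<bar> powr p \<le> J x y \<and> J x y \<le> A * \<bar>x - y\<bar> powr p"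
  defines "S \<equiv> \<Sum>x\<in>Vminus i n. \<Sum>y\<in>Vplus i n. J x y * mu i n x * mu i n y"
  shows "a / real i ^ 2 \<le> S" "S \<le> A * (1 - 2 / real i) powr p / real i ^ 2"
proof -
  define c where "c = 1 / (real i * 2 ^ n)"
  have summand: "J x y * mu i n x * mu i n y = J x y * c\<^sup>2"
    if "x \<in> Vminus i n" "y \<in> Vplus i n" for x y
    using that by (simp add: mu_Vminus mu_Vplus c_def power2_eq_square)
  have card: "real (card (Vminus i n)) * (real (card (Vplus i n)) * (B * c\<^sup>2)) = B / real i ^ 2"
    for B
    using i by (simp add: card_Vminus card_Vplus c_def field_simps power2_eq_square)
  have J_bounds: "a \<le> J x y" "J x y \<le> A * (1 - 2 / real i) powr p"
    if "x \<in> Vminus i n" "y \<in> Vplus i n" for x y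
    using J[OF that] wire_length_powr_bounds[OF i that p] mult_left_mono[OF _ a] mult_left_mono[OF _ A]
    by fastforce+
  have "real (card (Vminus i n)) * (real (card (Vplus i n)) * (a * c\<^sup>2)) \<le> S"
    unfolding S_def using J_bounds(1)
    by (intro sum_bounded_below) (simp add: summand mult_right_mono)
  then show "a / real i ^ 2 \<le> S"
    by (simp only: card)
  have "S \<le> real (card (Vminus i n))
              * (real (card (Vplus i n)) * (A * (1 - 2 / real i) powr p * c\<^sup>2))"
    unfolding S_def using J_bounds(2)
    by (intro sum_bounded_above) (simp add: summand mult_right_mono)
  then show "S \<le> A * (1 - 2 / real i) powr p / real i ^ 2"
    by (simp only: card)
qed

lemma tendsto_one_minus_two_over_powr: "(\<lambda>i. (1 - 2 / real i) powr p) \<longlonglongrightarrow> 1"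
proof -
  have "(\<lambda>i. 1 - 2 / real i) \<longlonglongrightarrow> 1 - 0"
    by (intro tendsto_diff tendsto_const lim_const_over_n)
  then have "(\<lambda>i. (1 - 2 / real i) powr p) \<longlonglongrightarrow> 1 powr p"
    by (intro tendsto_powr) auto
  then show ?thesis by simp
qed

theorem lemma6p2:
  fixes r :: "edge \<Rightarrow> real" and n :: nat and s :: real
    and lam Lam :: "nat \<Rightarrow> real"
  assumes r_pos: "\<And>e. valid_edge e \<Longrightarrow> r e > 0"
    and r_sym: "\<And>i. r (i, Mid) = r (i, Mid')"
    and s: "0 < s" "s < 1"
    and lam_pos: "\<And>i. i > 2 \<Longrightarrow> 0 < lam i"
    and lam_Lam: "\<And>i. i > 2 \<Longrightarrow> lam i \<le> Lam i"
    and bounds: "\<And>i m \<sigma>. i > 2 \<Longrightarrow> \<sigma> \<in> paths i m \<Longrightarrow>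
        lam i * \<bar>phi_path \<sigma> 0 - phi_path \<sigma> 1\<bar> powr (-1 - 2*s)
          \<le> jkernel r i m (phi_path \<sigma> 0) (phi_path \<sigma> 1)
      \<and> jkernel r i m (phi_path \<sigma> 0) (phi_path \<sigma> 1)
          \<le> Lam i * \<bar>phi_path \<sigma> 0 - phi_path \<sigma> 1\<bar> powr (-1 - 2*s)"
    and lam_lim: "(\<lambda>i. lam i / real i ^ 2) \<longlonglongrightarrow> 1"
    and Lam_lim: "(\<lambda>i. Lam i / real i ^ 2) \<longlonglongrightarrow> 1"
  shows "(\<lambda>i. \<Sum>x\<in>Vminus i n. \<Sum>y\<in>Vplus i n.
            jkernel r i n x y * mu i n x * mu i n y) \<longlonglongrightarrow> 1"
proof (rule tendsto_sandwich)
  define p where "p = -1 - 2 * s"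
  let ?S = "\<lambda>i. \<Sum>x\<in>Vminus i n. \<Sum>y\<in>Vplus i n. jkernel r i n x y * mu i n x * mu i n y"
  let ?upper = "\<lambda>i. Lam i * (1 - 2 / real i) powr p / real i ^ 2"
  have sum_bounds: "lam i / real i ^ 2 \<le> ?S i" "?S i \<le> ?upper i" if i: "2 < i" for i
  proof -
    have "0 \<le> lam i" "0 \<le> Lam i" "p \<le> 0"
      using lam_pos[OF i] lam_Lam[OF i] s(1) by (auto simp: p_def)
    moreover have "lam i * \<bar>x - y\<bar> powr p \<le> jkernel r i n x y
        \<and> jkernel r i n x y \<le> Lam i * \<bar>x - y\<bar> powr p"
      if "x \<in> Vminus i n" "y \<in> Vplus i n" for x y
      using wire_path_exists[of i x n y] that bounds[OF i] i by (auto simp: p_def)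
    ultimately show "lam i / real i ^ 2 \<le> ?S i" "?S i \<le> ?upper i"
      using kernel_sum_bounds[OF i] by blast+
  qed
  show "\<forall>\<^sub>F i in sequentially. lam i / real i ^ 2 \<le> ?S i"
    "\<forall>\<^sub>F i in sequentially. ?S i \<le> ?upper i"
    using sum_bounds by (auto intro: eventually_mono[OF eventually_gt_at_top[of 2]])
  show "(\<lambda>i. lam i / real i ^ 2) \<longlonglongrightarrow> 1" by (fact lam_lim)
  have "(\<lambda>i. Lam i / real i ^ 2 * (1 - 2 / real i) powr p) \<longlonglongrightarrow> 1 * 1"
    by (intro tendsto_mult Lam_lim tendsto_one_minus_two_over_powr)
  then show "?upper \<longlonglongrightarrow> 1" by simp
qed

end
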